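(* Let $\mathcal B$ be \textsc{AlternatingOracle}, fix an input and a realization of its random bits, and let $H_{\mathcal B}$ be an eviction graph of $\mathcal B$. Suppose $(a,b_1),\dots,(a,b_d)$ are edges of $H_{\mathcal B}$ such that $(b_1,\dots,b_d)$ is a divisible chain, with $h=d/3$ triples, and let $\psi$ be the maximum of the number of short triples among the first $h/2$ triples (left group) and the number of short triples among the last $h/2$ triples (right group). Then $$\sum_{x=1}^d\eta(b_x)\ge\frac{(d/6-\psi)^2\,k}{20}.$$
   Context: Caching with predictions. Cache of capacity $k$, starting empty; requests $\sigma(1),\dots,\sigma(T)$; $\nu(t)=\min\{s>t:\sigma(s)=\sigma(t)\}$ ($T+1$ if none); prediction $\omega(t)$ of $\nu(t)$ received with request $t$; $\eta(t)=|\nu(t)-\omega(t)|$. Cached pages are identified by the index of their most recent request: $\mathcal I(t)$ is the set of indices $\max\{t'\le t:\sigma(t')=s\}$ over cached pages $s$ after request $t$. \textsc{AlternatingOracle}: on a miss with full cache at time $t$ one of three rules evicts a page: BlindOracle (evict cached $\sigma(i)$, $i\in\mathcal I(t-1)$, with maximal $\omega(i)$); RandomAlg (evict a uniformly random cached page); Corrector (with $W=\{i\in\mathcal I(t-1):\omega(i)<t\}$, evict $\sigma(i)$, $i\in W$, with minimal $\omega(i)$ if $W\ne\emptyset$, otherwise evict as BlindOracle). If $\sigma(t)$ was never requested before, BlindOracle is used; otherwise, if the most recent eviction of page $\sigma(t)$ used BlindOracle / RandomAlg / Corrector, then at time $t$ RandomAlg / Corrector / BlindOracle is used, respectively. Triggering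 and chains: if page $\sigma(i)$ (current index $i$) is evicted and $\nu(i)\le T$, the eviction at time $\nu(i)$ is triggered by it; $(s_1,\dots,s_d)$ is a chain if for each $m<d$, $\sigma(s_{m+1})$ is evicted at time $\nu(s_m)$. Eviction graph: directed graph on $\{1,\dots,T\}$ such that for every edge $(i,j)$ there is a time $t+1$ at which the algorithm evicts $\sigma(j)$, $j\in\mathcal I(t)$, while $i\in\mathcal I(t)$ and $\nu(i)>\nu(j)$; for each $j$ at most one edge $(i,j)$. Triples and divisibility: a chain $(b_1,\dots,b_d)$ is divisible if $d=6m$ for a positive integer $m$ and, for each $i=1,\dots,d/3$, writing $(l_i,c_i,r_i)=(b_{3i-2},b_{3i-1},b_{3i})$ (the $i$-th triple), the page $\sigma(l_i)$ was evicted by the BlindOracle rule, $\sigma(c_i)$ by the RandomAlg rule, and $\sigma(r_i)$ by the Corrector rule. For the $i$-th triple let $L_i=t'-t$, where $t$ is the time of eviction of $\sigma(c_i)$ and $t'$ the time of eviction of $\sigma(r_i)$; the triple is short if $L_i\le k/10$. The left group consists of the first $h/2$ triples and the right group of the last $h/2$ triples, $h=d/3$. *)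

theory Defs
  imports Complex_Main
begin

text \<open>Requests are at times 1..T; sigma t is the page requested at time t, omega t the
prediction received with request t.  Cached pages are identified by the index of their
most recent request.\<close>

datatype rule = BlindOracle | RandomAlg | Corrector

fun next_rule :: "rule \<Rightarrow> rule" where
  "next_rule BlindOracle = RandomAlg"
| "next_rule RandomAlg = Corrector"
| "next_rule Corrector = BlindOracle"

definition nu :: "(nat \<Rightarrow> 'a) \<Rightarrow> nat \<Rightarrow> nat \<Rightarrow> nat" where
  "nu \<sigma> T t = (if \<exists>s. t < s \<and> s \<le> T \<and> \<sigma> s = \<sigma> t
                 then (LEAST s. t < s \<and> s \<le> T \<and> \<sigma> s = \<sigma> t) else T + 1)"

definition eta :: "(nat \<Rightarrow> 'a) \<Rightarrow> (nat \<Rightarrow> nat) \<Rightarrow> nat \<Rightarrow> nat \<Rightarrow> real" where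
  "eta \<sigma> \<omega> T t = \<bar>real (nu \<sigma> T t) - real (\<omega> t)\<bar>"

text \<open>RandomAlg: any cached page (an arbitrary realization of the random bits).
Ties in BlindOracle/Corrector are broken arbitrarily.\<close>
definition valid_choice :: "(nat \<Rightarrow> nat) \<Rightarrow> nat \<Rightarrow> nat set \<Rightarrow> rule \<Rightarrow> nat \<Rightarrow> bool" where
  "valid_choice \<omega> t C r i \<longleftrightarrow> i \<in> C \<and>
     (case r of
        BlindOracle \<Rightarrow> (\<forall>j\<in>C. \<omega> j \<le> \<omega> i)
      | RandomAlg \<Rightarrow> True
      | Corrector \<Rightarrow>
          (let W = {j\<in>C. \<omega> j < t} in
             (W \<noteq> {} \<longrightarrow> i \<in> W \<and> (\<forall>j\<in>W. \<omega> i \<le> \<omega> j)) \<and>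
             (W = {} \<longrightarrow> (\<forall>j\<in>C. \<omega> j \<le> \<omega> i))))"

text \<open>The rule used at a miss with full cache at time t, given evictions E before t.
E s = Some (i, r): at time s the page with current index i was evicted using rule r.\<close>
definition rule_used :: "(nat \<Rightarrow> 'a) \<Rightarrow> (nat \<Rightarrow> (nat \<times> rule) option) \<Rightarrow> nat \<Rightarrow> rule \<Rightarrow> bool" where
  "rule_used \<sigma> E t r \<longleftrightarrow>
     (if \<not> (\<exists>t'. 1 \<le> t' \<and> t' < t \<and> \<sigma> t' = \<sigma> t) then r = BlindOracle
      else (\<exists>s j r'. s < t \<and> E s = Some (j, r') \<and> \<sigma> j = \<sigma> t \<and>
              (\<forall>s' j' r''. s < s' \<and> s' < t \<and> E s' = Some (j', r'') \<longrightarrow> \<sigma> j' \<noteq> \<sigma> t) \<and>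
              r = next_rule r'))"

definition AO_step :: "nat \<Rightarrow> (nat \<Rightarrow> 'a) \<Rightarrow> (nat \<Rightarrow> nat) \<Rightarrow> (nat \<Rightarrow> (nat \<times> rule) option)
                        \<Rightarrow> nat \<Rightarrow> nat set \<Rightarrow> nat set \<Rightarrow> bool" where
  "AO_step k \<sigma> \<omega> E t C C' \<longleftrightarrow>
     (if \<exists>i\<in>C. \<sigma> i = \<sigma> t then E t = None \<and> C' = insert t {i\<in>C. \<sigma> i \<noteq> \<sigma> t}
      else if card C < k then E t = None \<and> C' = insert t C
      else (\<exists>i r. E t = Some (i, r) \<and> rule_used \<sigma> E t r \<and> valid_choice \<omega> t C r i \<and>
                 C' = insert t (C - {i})))"

text \<open>(I, E) is a run of AlternatingOracle with cache capacity k on requests sigma(1..T)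
with predictions omega (for some realization of the random bits and tie-breaking):
I t is the set of cached indices after request t, E t the eviction at time t.\<close>
definition AO_run :: "nat \<Rightarrow> nat \<Rightarrow> (nat \<Rightarrow> 'a) \<Rightarrow> (nat \<Rightarrow> nat) \<Rightarrow> (nat \<Rightarrow> nat set)
                       \<Rightarrow> (nat \<Rightarrow> (nat \<times> rule) option) \<Rightarrow> bool" where
  "AO_run k T \<sigma> \<omega> I E \<longleftrightarrow>
     I 0 = {} \<and> (\<forall>t. (t = 0 \<or> T < t) \<longrightarrow> E t = None) \<and>
     (\<forall>t. 1 \<le> t \<and> t \<le> T \<longrightarrow> AO_step k \<sigma> \<omega> E t (I (t - 1)) (I t))"

definition eviction_graph :: "nat \<Rightarrow> (nat \<Rightarrow> 'a) \<Rightarrow> (nat \<Rightarrow> nat set)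
       \<Rightarrow> (nat \<Rightarrow> (nat \<times> rule) option) \<Rightarrow> (nat \<times> nat) set \<Rightarrow> bool" where
  "eviction_graph T \<sigma> I E G \<longleftrightarrow>
     G \<subseteq> {1..T} \<times> {1..T} \<and>
     (\<forall>(i, j)\<in>G. \<exists>t r. t + 1 \<le> T \<and> E (t + 1) = Some (j, r) \<and> j \<in> I t \<and> i \<in> I t \<and>
                        nu \<sigma> T i > nu \<sigma> T j) \<and>
     (\<forall>i i' j. (i, j) \<in> G \<and> (i', j) \<in> G \<longrightarrow> i = i')"

definition is_chain :: "(nat \<Rightarrow> 'a) \<Rightarrow> nat \<Rightarrow> (nat \<Rightarrow> (nat \<times> rule) option) \<Rightarrow> nat list \<Rightarrow> bool" where
  "is_chain \<sigma> T E b \<longleftrightarrow> (\<forall>m. m + 1 < length b \<longrightarrow> (\<exists>r. E (nu \<sigma> T (b ! m)) = Some (b ! (m + 1), r)))"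

definition evicted_by :: "(nat \<Rightarrow> (nat \<times> rule) option) \<Rightarrow> nat \<Rightarrow> rule \<Rightarrow> bool" where
  "evicted_by E j r \<longleftrightarrow> (\<exists>t. E t = Some (j, r))"

definition divisible_chain :: "(nat \<Rightarrow> 'a) \<Rightarrow> nat \<Rightarrow> (nat \<Rightarrow> (nat \<times> rule) option) \<Rightarrow> nat list \<Rightarrow> bool" where
  "divisible_chain \<sigma> T E b \<longleftrightarrow> is_chain \<sigma> T E b \<and>
     (\<exists>m>0. length b = 6 * m) \<and>
     (\<forall>i < length b div 3. evicted_by E (b ! (3 * i)) BlindOracle \<and>
                            evicted_by E (b ! (3 * i + 1)) RandomAlg \<and>
                            evicted_by E (b ! (3 * i + 2)) Corrector)"

definition short_triple :: "nat \<Rightarrow> (nat \<Rightarrow> (nat \<times> rule) option) \<Rightarrow> nat list \<Rightarrow> nat \<Rightarrow> bool" where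
  "short_triple k E b i \<longleftrightarrow>
     (\<exists>t t' r r'. E t = Some (b ! (3 * i + 1), r) \<and> E t' = Some (b ! (3 * i + 2), r') \<and>
                 real_of_int (int t' - int t) \<le> real k / 10)"

definition psi :: "nat \<Rightarrow> (nat \<Rightarrow> (nat \<times> rule) option) \<Rightarrow> nat list \<Rightarrow> nat" where
  "psi k E b = (let h = length b div 3 in
     max (card {i. i < h div 2 \<and> short_triple k E b i})
         (card {i. h - h div 2 \<le> i \<and> i < h \<and> short_triple k E b i}))"

end

theory Submission
  imports Defs
begin

text \<open>Let \<open>t\<^sub>i < t'\<^sub>i\<close> be the eviction times of the middle and right pages of the \<open>i\<close>-th
triple; these intervals are interleaved along the chain, and a non-short triple has
\<open>t'\<^sub>i - t\<^sub>i > k/10\<close>. The common source \<open>a\<close> of the eviction-graph edges is cached at every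
eviction of the chain. Hence BlindOracle evicting the left page \<open>l\<^sub>i\<close> (whose next request is
at \<open>t\<^sub>i\<close>) gives \<open>\<eta>(l\<^sub>i) \<ge> \<omega>(a) - t\<^sub>i\<close>, and Corrector evicting \<open>r\<^sub>i\<close> at a time \<open>t'\<^sub>i > \<omega>(a)\<close> only
removes a page predicted no later than \<open>a\<close>, giving \<open>\<eta>(r\<^sub>i) \<ge> t'\<^sub>i - \<omega>(a)\<close>. If \<open>\<omega>(a)\<close> lies
before the right group, the right pages of that group pay at least the distances of their
\<open>t'\<^sub>i\<close> from the start of the group; otherwise the left pages of the left group pay the
distances of their \<open>t\<^sub>i\<close> from its end. Since the \<open>j\<close>-th non-short triple of a group lies at
distance at least \<open>j k/10\<close>, and each group has at least \<open>d/6 - \<psi>\<close> non-short triples, the sum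
is at least \<open>(d/6 - \<psi>)\<^sup>2 k/20\<close>.\<close>

section \<open>Sums over interleaved intervals\<close>

lemma card_filter_add_card_filter_not:
  "finite A \<Longrightarrow> card {x \<in> A. P x} + card {x \<in> A. \<not> P x} = card A"
  by (subst card_Un_disjoint[symmetric]) (auto intro: arg_cong[where f = card])

lemma card_lessThan_Suc_filter:
  "card {j. j < Suc i \<and> P j} = card {j. j < i \<and> P j} + (if P i then 1 else 0)"
proof -
  have "{j. j < Suc i \<and> P j} = (if P i then insert i {j. j < i \<and> P j} else {j. j < i \<and> P j})"
    by (auto simp: less_Suc_eq)
  then show ?thesis
    by simp
qed

lemma card_filter_prefix_sum:
  "card {i. i < n \<and> P i} * (card {i. i < n \<and> P i} + 1)
     \<le> 2 * (\<Sum>i<n. card {j. j < Suc i \<and> P j})"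
proof (induction n)
  case (Suc n)
  then show ?case
    by (cases "P n") (auto simp: card_lessThan_Suc_filter)
qed simp

locale interleaved_intervals =
  fixes n :: nat and t t' :: "nat \<Rightarrow> real" and P :: "nat \<Rightarrow> bool" and K :: real
  assumes K_nonneg: "0 \<le> K"
    and interval: "\<And>i. i < n \<Longrightarrow> t i \<le> t' i"
    and interleaved: "\<And>i. Suc i < n \<Longrightarrow> t' i \<le> t (Suc i)"
    and long_gap: "\<And>i. i < n \<Longrightarrow> P i \<Longrightarrow> K \<le> t' i - t i"
begin

lemma interleaved_gaps_accumulate:
  "i < n \<Longrightarrow> K * card {j. j < Suc i \<and> P j} \<le> t' i - t 0"
proof (induction i)
  case 0
  then show ?case
    using interval long_gap card_lessThan_Suc_filter[of 0 P] by auto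
next
  case (Suc i)
  then have "K * card {j. j < Suc i \<and> P j} \<le> t' i - t 0" "t' i \<le> t (Suc i)"
    using interleaved by auto
  moreover have "(if P (Suc i) then K else 0) \<le> t' (Suc i) - t (Suc i)"
    using Suc.prems interval long_gap by auto
  moreover have "K * card {j. j < Suc (Suc i) \<and> P j}
      = K * card {j. j < Suc i \<and> P j} + (if P (Suc i) then K else 0)"
    by (subst card_lessThan_Suc_filter) (simp add: distrib_left)
  ultimately show ?case
    by linarith
qed

lemma sum_interleaved_from_first_ge:
  "K * card {i. i < n \<and> P i} * (card {i. i < n \<and> P i} + 1) / 2 \<le> (\<Sum>i<n. t' i - t 0)"
proof -
  have "K * card {i. i < n \<and> P i} * (card {i. i < n \<and> P i} + 1) / 2
      \<le> K * (\<Sum>i<n. card {j. j < Suc i \<and> P j})"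
    using mult_left_mono[OF of_nat_mono[OF card_filter_prefix_sum[of n P]] K_nonneg]
    by (simp add: algebra_simps)
  also have "\<dots> \<le> (\<Sum>i<n. t' i - t 0)"
    unfolding of_nat_sum sum_distrib_left by (rule sum_mono) (use interleaved_gaps_accumulate in auto)
  finally show ?thesis .
qed

lemma sum_interleaved_to_last_ge:
  "K * card {i. i < n \<and> P i} * (card {i. i < n \<and> P i} + 1) / 2 \<le> (\<Sum>i<n. t' (n - 1) - t i)"
proof -
  interpret reflected: interleaved_intervals n "\<lambda>i. - t' (n - Suc i)" "\<lambda>i. - t (n - Suc i)"
    "\<lambda>i. P (n - Suc i)" K
  proof
    fix i
    assume "Suc i < n"
    then show "- t (n - Suc i) \<le> - t' (n - Suc (Suc i))"
      using interleaved[of "n - Suc (Suc i)"] by (simp add: Suc_diff_Suc)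
  qed (use K_nonneg interval long_gap in auto)
  have "bij_betw (\<lambda>i. n - Suc i) {i. i < n \<and> P (n - Suc i)} {i. i < n \<and> P i}"
    by (rule bij_betw_byWitness[where f' = "\<lambda>i. n - Suc i"]) auto
  then have "card {i. i < n \<and> P (n - Suc i)} = card {i. i < n \<and> P i}"
    by (rule bij_betw_same_card)
  moreover have "(\<Sum>i<n. - t (n - Suc i) - - t' (n - Suc 0)) = (\<Sum>i<n. t' (n - 1) - t i)"
    using sum.nat_diff_reindex[of "\<lambda>i. t' (n - 1) - t i" n] by simp
  ultimately show ?thesis
    using reflected.sum_interleaved_from_first_ge by simp
qed

end

lemma sum_lessThan_shift_le:
  fixes f :: "nat \<Rightarrow> real"
  assumes "\<And>i. 0 \<le> f i"
  shows "(\<Sum>i<n. f (m + i)) \<le> (\<Sum>i<m + n. f i)"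
proof -
  have "(\<Sum>i<n. f (m + i)) = (\<Sum>i\<in>{m..<m + n}. f i)"
    using sum.shift_bounds_nat_ivl[of f 0 m n] by (simp add: atLeast0LessThan add.commute)
  also have "\<dots> \<le> (\<Sum>i<m + n. f i)"
    by (rule sum_mono2) (use assms in auto)
  finally show ?thesis .
qed

lemma interleaved_two_groups_sum_ge:
  fixes A B :: "nat \<Rightarrow> real" and w :: real
  assumes intervals: "interleaved_intervals (2 * m) t t' P K"
    and A: "\<And>i. i < 2 * m \<Longrightarrow> w - t i \<le> A i" "\<And>i. 0 \<le> A i"
    and B: "\<And>i. i < 2 * m \<Longrightarrow> w < t' i \<Longrightarrow> t' i - w \<le> B i" "\<And>i. 0 \<le> B i"
  obtains c where "c = card {i. i < m \<and> P i} \<or> c = card {i. m \<le> i \<and> i < 2 * m \<and> P i}"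
    and "K * c * (c + 1) / 2 \<le> (\<Sum>i<2 * m. A i + B i)"
proof (cases "w \<le> t m")
  case True
  interpret all: interleaved_intervals "2 * m" t t' P K
    by (fact intervals)
  interpret right: interleaved_intervals m "\<lambda>i. t (m + i)" "\<lambda>i. t' (m + i)" "\<lambda>i. P (m + i)" K
    by unfold_locales (auto intro: all.K_nonneg all.interval all.interleaved all.long_gap)
  have "bij_betw (\<lambda>i. m + i) {i. i < m \<and> P (m + i)} {i. m \<le> i \<and> i < 2 * m \<and> P i}"
    by (rule bij_betw_byWitness[where f' = "\<lambda>i. i - m"]) auto
  then have card_eq: "card {i. i < m \<and> P (m + i)} = card {i. m \<le> i \<and> i < 2 * m \<and> P i}"
    by (rule bij_betw_same_card)
  have "(\<Sum>i<m. t' (m + i) - t (m + 0)) \<le> (\<Sum>i<m. B (m + i))"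
  proof (rule sum_mono)
    fix i
    assume i: "i \<in> {..<m}"
    have "0 \<le> K * card {j. j < Suc i \<and> P (m + j)}"
      using right.K_nonneg by simp
    then have "t m \<le> t' (m + i)"
      using right.interleaved_gaps_accumulate[of i] i by simp
    then show "t' (m + i) - t (m + 0) \<le> B (m + i)"
      using True B[of "m + i"] i by (cases "w < t' (m + i)") auto
  qed
  also have "\<dots> \<le> (\<Sum>i<m. A (m + i) + B (m + i))"
    by (rule sum_mono) (simp add: A(2))
  also have "\<dots> \<le> (\<Sum>i<2 * m. A i + B i)"
    using sum_lessThan_shift_le[of "\<lambda>i. A i + B i" m m] A(2) B(2) by (simp add: mult_2)
  finally show ?thesis
    using that[of "card {i. i < m \<and> P (m + i)}"] right.sum_interleaved_from_first_ge card_eq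
    by simp
next
  case False
  interpret all: interleaved_intervals "2 * m" t t' P K
    by (fact intervals)
  interpret left: interleaved_intervals m t t' P K
    by unfold_locales (auto intro: all.K_nonneg all.interval all.interleaved all.long_gap)
  have "(\<Sum>i<m. t' (m - 1) - t i) \<le> (\<Sum>i<m. A i)"
  proof (rule sum_mono)
    fix i
    assume "i \<in> {..<m}"
    then have "t' (m - 1) \<le> t m"
      using all.interleaved[of "m - 1"] by simp
    then show "t' (m - 1) - t i \<le> A i"
      using False A(1)[of i] \<open>i \<in> {..<m}\<close> by simp
  qed
  also have "\<dots> \<le> (\<Sum>i<m. A i + B i)"
    by (rule sum_mono) (simp add: B(2))
  also have "\<dots> \<le> (\<Sum>i<2 * m. A i + B i)"
    by (rule sum_mono2) (use A(2) B(2) in \<open>auto intro: add_nonneg_nonneg\<close>)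
  finally show ?thesis
    using that[of "card {i. i < m \<and> P i}"] left.sum_interleaved_to_last_ge by simp
qed

section \<open>Runs of AlternatingOracle\<close>

lemma less_nuI:
  assumes "u \<le> T" and "\<And>s. t < s \<Longrightarrow> s \<le> u \<Longrightarrow> \<sigma> s \<noteq> \<sigma> t"
  shows "u < nu \<sigma> T t"
proof (cases "\<exists>s. t < s \<and> s \<le> T \<and> \<sigma> s = \<sigma> t")
  case True
  then have "t < (LEAST s. t < s \<and> s \<le> T \<and> \<sigma> s = \<sigma> t)"
    and "\<sigma> (LEAST s. t < s \<and> s \<le> T \<and> \<sigma> s = \<sigma> t) = \<sigma> t"
    by (metis (mono_tags, lifting) LeastI_ex)+
  then show ?thesis
    using True assms(2) by (fastforce simp: nu_def not_le[symmetric])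
next
  case False
  then show ?thesis
    using assms(1) unfolding nu_def by auto
qed

lemma AO_step_subset: "AO_step k \<sigma> \<omega> E t C C' \<Longrightarrow> C' \<subseteq> insert t C"
  unfolding AO_step_def by (auto split: if_splits)

lemma AO_step_new_request: "AO_step k \<sigma> \<omega> E t C C' \<Longrightarrow> j \<in> C' \<Longrightarrow> j \<noteq> t \<Longrightarrow> \<sigma> j \<noteq> \<sigma> t"
  unfolding AO_step_def by (auto split: if_splits)

lemma AO_step_eviction:
  assumes "AO_step k \<sigma> \<omega> E t C C'" and "E t = Some (j, r)"
  shows "\<forall>i\<in>C. \<sigma> i \<noteq> \<sigma> t" and "valid_choice \<omega> t C r j" and "C' = insert t (C - {j})"
  using assms unfolding AO_step_def by (auto split: if_splits)

lemma AO_run_step: "AO_run k T \<sigma> \<omega> I E \<Longrightarrow> 1 \<le> t \<Longrightarrow> t \<le> T \<Longrightarrow> AO_step k \<sigma> \<omega> E t (I (t - 1)) (I t)"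
  unfolding AO_run_def by blast

lemma AO_run_eviction_time:
  assumes "AO_run k T \<sigma> \<omega> I E" and "E s = Some e"
  shows "1 \<le> s \<and> s \<le> T"
proof -
  have "\<not> (s = 0 \<or> T < s)"
    using assms unfolding AO_run_def by fastforce
  then show ?thesis
    by simp
qed

lemma AO_run_cached_index:
  assumes run: "AO_run k T \<sigma> \<omega> I E"
  shows "t \<le> T \<Longrightarrow> j \<in> I t \<Longrightarrow> 1 \<le> j \<and> j \<le> t \<and> (\<forall>s. j < s \<and> s \<le> t \<longrightarrow> \<sigma> s \<noteq> \<sigma> j)"
proof (induction t)
  case 0
  then show ?case
    using run by (simp add: AO_run_def)
next
  case (Suc t)
  have step: "AO_step k \<sigma> \<omega> E (Suc t) (I t) (I (Suc t))"
    using AO_run_step[OF run, of "Suc t"] Suc.prems by simp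
  show ?case
  proof (cases "j = Suc t")
    case False
    then have "j \<in> I t" "\<sigma> j \<noteq> \<sigma> (Suc t)"
      using AO_step_subset[OF step] AO_step_new_request[OF step] Suc.prems by auto
    then show ?thesis
      using Suc by (auto simp: le_Suc_eq)
  qed auto
qed

lemma AO_run_eviction_cached:
  assumes run: "AO_run k T \<sigma> \<omega> I E" and evict: "E s = Some (j, r)"
  shows "j \<in> I (s - 1)" and "valid_choice \<omega> s (I (s - 1)) r j" and "j \<notin> I s" and "j < s"
proof -
  have s: "1 \<le> s" "s \<le> T"
    using AO_run_eviction_time[OF run evict] by auto
  have step: "AO_step k \<sigma> \<omega> E s (I (s - 1)) (I s)"
    using AO_run_step[OF run s] .
  show choice: "valid_choice \<omega> s (I (s - 1)) r j"
    using AO_step_eviction(2)[OF step evict] .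
  then show cached: "j \<in> I (s - 1)"
    by (simp add: valid_choice_def)
  then have "j \<le> s - 1"
    using AO_run_cached_index[OF run _ cached] s by simp
  then show "j < s"
    using s by simp
  then show "j \<notin> I s"
    using AO_step_eviction(3)[OF step evict] by simp
qed

lemma AO_run_nu_evicted:
  assumes run: "AO_run k T \<sigma> \<omega> I E" and evict: "E s = Some (j, r)"
  shows "s < nu \<sigma> T j"
proof (rule less_nuI)
  have s: "1 \<le> s" "s \<le> T"
    using AO_run_eviction_time[OF run evict] by auto
  then show "s \<le> T" by simp
  have cached: "j \<in> I (s - 1)"
    using AO_run_eviction_cached(1)[OF run evict] .
  have miss: "\<sigma> j \<noteq> \<sigma> s"
    using AO_step_eviction(1)[OF AO_run_step[OF run s] evict] cached by blast
  fix s'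
  assume "j < s'" "s' \<le> s"
  then show "\<sigma> s' \<noteq> \<sigma> j"
    using AO_run_cached_index[OF run, of "s - 1" j] cached miss s by (cases "s' = s") auto
qed

lemma AO_run_not_recached:
  assumes run: "AO_run k T \<sigma> \<omega> I E" and "j \<notin> I s" and "j \<le> s"
  shows "s \<le> t \<Longrightarrow> t \<le> T \<Longrightarrow> j \<notin> I t"
proof (induction t rule: dec_induct)
  case (step t)
  then show ?case
    using AO_step_subset[OF AO_run_step[OF run, of "Suc t"]] assms(3) by auto
qed (use assms(2) in simp)

lemma AO_run_eviction_time_unique:
  assumes run: "AO_run k T \<sigma> \<omega> I E" and "E s = Some (j, r)" and "E s' = Some (j, r')"
  shows "s = s'"
proof -
  have "\<not> s < s'" if evict: "E s = Some (j, r)" "E s' = Some (j, r')" for s s' r r'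
  proof
    assume "s < s'"
    then have "j \<notin> I (s' - 1)"
      using AO_run_not_recached[OF run AO_run_eviction_cached(3)[OF run evict(1)], of "s' - 1"]
        AO_run_eviction_cached(4)[OF run evict(1)] AO_run_eviction_time[OF run evict(2)] by simp
    then show False
      using AO_run_eviction_cached(1)[OF run evict(2)] by simp
  qed
  then show ?thesis
    using assms(2,3) by (meson linorder_neqE_nat)
qed

lemma eta_ge_BlindOracle_eviction:
  assumes run: "AO_run k T \<sigma> \<omega> I E" and evict: "E s = Some (j, BlindOracle)"
    and cached: "a \<in> I (s - 1)"
  shows "real (\<omega> a) - real (nu \<sigma> T j) \<le> eta \<sigma> \<omega> T j"
proof -
  have "\<omega> a \<le> \<omega> j"
    using AO_run_eviction_cached(2)[OF run evict] cached by (simp add: valid_choice_def)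
  then show ?thesis
    unfolding eta_def by linarith
qed

lemma eta_gt_Corrector_eviction:
  assumes run: "AO_run k T \<sigma> \<omega> I E" and evict: "E s = Some (j, Corrector)"
    and cached: "a \<in> I (s - 1)" and early: "\<omega> a < s"
  shows "real s - real (\<omega> a) < eta \<sigma> \<omega> T j"
proof -
  have "\<omega> j \<le> \<omega> a"
    using AO_run_eviction_cached(2)[OF run evict] cached early
    by (auto simp: valid_choice_def Let_def)
  moreover have "s < nu \<sigma> T j"
    using AO_run_nu_evicted[OF run evict] .
  ultimately show ?thesis
    unfolding eta_def by linarith
qed

lemma eviction_graph_source_cached:
  assumes run: "AO_run k T \<sigma> \<omega> I E" and graph: "eviction_graph T \<sigma> I E G"
    and edge: "(a, j) \<in> G" and evict: "E s = Some (j, r)"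
  shows "a \<in> I (s - 1)"
proof -
  obtain t r' where "E (t + 1) = Some (j, r')" and "a \<in> I t"
    using graph edge unfolding eviction_graph_def by blast
  with AO_run_eviction_time_unique[OF run evict] show ?thesis
    by simp
qed

section \<open>Divisible chains below a common source\<close>

lemma chain_nu_strict_mono:
  assumes run: "AO_run k T \<sigma> \<omega> I E" and chain: "is_chain \<sigma> T E b"
  shows "x < y \<Longrightarrow> y < length b \<Longrightarrow> nu \<sigma> T (b ! x) < nu \<sigma> T (b ! y)"
proof (induction y rule: less_Suc_induct)
  case (1 y)
  then obtain r where "E (nu \<sigma> T (b ! y)) = Some (b ! Suc y, r)"
    using chain unfolding is_chain_def by auto
  then show ?case
    by (rule AO_run_nu_evicted[OF run])
next
  case (2 x y z)
  then show ?case
    by (meson order.strict_trans)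
qed

lemma chain_long_triple_gap:
  assumes chain: "is_chain \<sigma> T E b" and i: "3 * i + 2 < length b"
    and long: "\<not> short_triple k E b i"
  shows "real k / 10 \<le> real (nu \<sigma> T (b ! (3 * i + 1))) - real (nu \<sigma> T (b ! (3 * i)))"
proof -
  obtain r r' where "E (nu \<sigma> T (b ! (3 * i))) = Some (b ! (3 * i + 1), r)"
    and "E (nu \<sigma> T (b ! (3 * i + 1))) = Some (b ! (3 * i + 2), r')"
    using chain[unfolded is_chain_def, rule_format, of "3 * i"]
      chain[unfolded is_chain_def, rule_format, of "3 * i + 1"] i by auto
  with long show ?thesis
    unfolding short_triple_def by fastforce
qed

lemma divisible_chain_interleaved_intervals:
  assumes run: "AO_run k T \<sigma> \<omega> I E" and divisible: "divisible_chain \<sigma> T E b"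
    and length: "length b = 6 * m"
  shows "interleaved_intervals (2 * m) (\<lambda>i. real (nu \<sigma> T (b ! (3 * i))))
      (\<lambda>i. real (nu \<sigma> T (b ! (3 * i + 1)))) (\<lambda>i. \<not> short_triple k E b i) (real k / 10)"
proof -
  have chain: "is_chain \<sigma> T E b"
    using divisible unfolding divisible_chain_def by blast
  show ?thesis
  proof
    fix i
    assume "i < 2 * m"
    then show "real (nu \<sigma> T (b ! (3 * i))) \<le> real (nu \<sigma> T (b ! (3 * i + 1)))"
      and "\<not> short_triple k E b i \<Longrightarrow>
        real k / 10 \<le> real (nu \<sigma> T (b ! (3 * i + 1))) - real (nu \<sigma> T (b ! (3 * i)))"
      using chain_nu_strict_mono[OF run chain, of "3 * i" "3 * i + 1"]
        chain_long_triple_gap[OF chain, of i] length by simp_all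
  next
    fix i
    assume "Suc i < 2 * m"
    then show "real (nu \<sigma> T (b ! (3 * i + 1))) \<le> real (nu \<sigma> T (b ! (3 * Suc i)))"
      using chain_nu_strict_mono[OF run chain, of "3 * i + 1" "3 * Suc i"] length by simp
  qed simp
qed

context
  fixes k T :: nat and \<sigma> :: "nat \<Rightarrow> 'a" and \<omega> :: "nat \<Rightarrow> nat"
    and I :: "nat \<Rightarrow> nat set" and E :: "nat \<Rightarrow> (nat \<times> rule) option"
    and G :: "(nat \<times> nat) set" and a :: nat and b :: "nat list"
  assumes run: "AO_run k T \<sigma> \<omega> I E"
    and graph: "eviction_graph T \<sigma> I E G"
    and edges: "\<forall>x<length b. (a, b ! x) \<in> G"
    and divisible: "divisible_chain \<sigma> T E b"
begin

lemma divisible_chain_left_eta: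
  assumes i: "i < length b div 3"
  shows "real (\<omega> a) - real (nu \<sigma> T (b ! (3 * i))) \<le> eta \<sigma> \<omega> T (b ! (3 * i))"
proof -
  obtain s where evict: "E s = Some (b ! (3 * i), BlindOracle)"
    using divisible i unfolding divisible_chain_def evicted_by_def by blast
  have "a \<in> I (s - 1)"
    using eviction_graph_source_cached[OF run graph _ evict] edges i by simp
  then show ?thesis
    using eta_ge_BlindOracle_eviction[OF run evict] by blast
qed

lemma divisible_chain_right_eta:
  assumes i: "i < length b div 3" and early: "\<omega> a < nu \<sigma> T (b ! (3 * i + 1))"
  shows "real (nu \<sigma> T (b ! (3 * i + 1))) - real (\<omega> a) \<le> eta \<sigma> \<omega> T (b ! (3 * i + 2))"
proof -
  obtain s where evict: "E s = Some (b ! (3 * i + 2), Corrector)"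
    using divisible i unfolding divisible_chain_def evicted_by_def by blast
  obtain r where "E (nu \<sigma> T (b ! (3 * i + 1))) = Some (b ! (3 * i + 2), r)"
    using divisible[unfolded divisible_chain_def is_chain_def] i by fastforce
  then have s: "s = nu \<sigma> T (b ! (3 * i + 1))"
    using AO_run_eviction_time_unique[OF run evict] by blast
  have "a \<in> I (s - 1)"
    using eviction_graph_source_cached[OF run graph _ evict] edges i by simp
  then show ?thesis
    using eta_gt_Corrector_eviction[OF run evict] early s by fastforce
qed

end

lemma psi_bounds:
  assumes "length b div 3 = 2 * m"
  shows "psi k E b \<le> m"
    and "m \<le> card {i. i < m \<and> \<not> short_triple k E b i} + psi k E b"
    and "m \<le> card {i. m \<le> i \<and> i < 2 * m \<and> \<not> short_triple k E b i} + psi k E b"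
proof -
  have psi: "psi k E b = max (card {i. i < m \<and> short_triple k E b i})
                            (card {i. m \<le> i \<and> i < 2 * m \<and> short_triple k E b i})"
    using assms by (simp add: psi_def)
  have "card {i. i < m \<and> short_triple k E b i} + card {i. i < m \<and> \<not> short_triple k E b i} = m"
    using card_filter_add_card_filter_not[of "{..<m}" "short_triple k E b"] by simp
  moreover have "card {i. m \<le> i \<and> i < 2 * m \<and> short_triple k E b i}
      + card {i. m \<le> i \<and> i < 2 * m \<and> \<not> short_triple k E b i} = m"
    using card_filter_add_card_filter_not[of "{m..<2 * m}" "short_triple k E b"] by simp
  ultimately show "psi k E b \<le> m"
    and "m \<le> card {i. i < m \<and> \<not> short_triple k E b i} + psi k E b"
    and "m \<le> card {i. m \<le> i \<and> i < 2 * m \<and> \<not> short_triple k E b i} + psi k E b"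
    unfolding psi by linarith+
qed

lemma sum_outer_triples_le:
  fixes f :: "nat \<Rightarrow> real"
  assumes "\<And>x. 0 \<le> f x"
  shows "(\<Sum>i<n. f (3 * i) + f (3 * i + 2)) \<le> (\<Sum>x<3 * n. f x)"
proof -
  have "(\<Sum>i<n. f (3 * i) + f (3 * i + 2)) \<le> (\<Sum>i<n. f (3 * i) + f (3 * i + 1) + f (3 * i + 2))"
    by (rule sum_mono) (simp add: assms)
  also have "\<dots> = (\<Sum>x<3 * n. f x)"
    using sum.nat_group[where g = f and k = 3 and n = n]
    by (simp add: mult.commute numeral_3_eq_3 add.assoc)
  finally show ?thesis .
qed

theorem mainTheorem10:
  fixes k T :: nat and \<sigma> :: "nat \<Rightarrow> 'a" and \<omega> :: "nat \<Rightarrow> nat"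
    and I :: "nat \<Rightarrow> nat set" and E :: "nat \<Rightarrow> (nat \<times> rule) option"
    and G :: "(nat \<times> nat) set" and a :: nat and b :: "nat list"
  assumes "AO_run k T \<sigma> \<omega> I E"
    and "eviction_graph T \<sigma> I E G"
    and "\<forall>x<length b. (a, b ! x) \<in> G"
    and "divisible_chain \<sigma> T E b"
  shows "(\<Sum>x<length b. eta \<sigma> \<omega> T (b ! x))
           \<ge> (real (length b) / 6 - real (psi k E b))\<^sup>2 * real k / 20"
proof -
  obtain m where length: "length b = 6 * m"
    using assms(4) unfolding divisible_chain_def by blast
  then have triples: "length b div 3 = 2 * m"
    by simp
  obtain c where c: "c = card {i. i < m \<and> \<not> short_triple k E b i}
                       \<or> c = card {i. m \<le> i \<and> i < 2 * m \<and> \<not> short_triple k E b i}"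
    and bound: "real k / 10 * c * (c + 1) / 2
                  \<le> (\<Sum>i<2 * m. eta \<sigma> \<omega> T (b ! (3 * i)) + eta \<sigma> \<omega> T (b ! (3 * i + 2)))"
    by (rule interleaved_two_groups_sum_ge[OF divisible_chain_interleaved_intervals[OF assms(1,4) length],
          where w = "real (\<omega> a)"
          and A = "\<lambda>i. eta \<sigma> \<omega> T (b ! (3 * i))" and B = "\<lambda>i. eta \<sigma> \<omega> T (b ! (3 * i + 2))"])
      (use triples divisible_chain_left_eta[OF assms] divisible_chain_right_eta[OF assms]
        in \<open>auto simp: eta_def\<close>)
  have "psi k E b \<le> m" and "m \<le> c + psi k E b"
    using psi_bounds[OF triples, of k E] c by auto
  then have "(real m - psi k E b)\<^sup>2 \<le> (real c)\<^sup>2"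
    by (intro power_mono) linarith+
  also have "\<dots> \<le> real c * (real c + 1)"
    by (simp add: power2_eq_square algebra_simps)
  finally have "(real m - psi k E b)\<^sup>2 * (real k / 20) \<le> real c * (real c + 1) * (real k / 20)"
    by (rule mult_right_mono) simp
  then have "(real (length b) / 6 - psi k E b)\<^sup>2 * real k / 20 \<le> real k / 10 * c * (c + 1) / 2"
    using length by (simp add: algebra_simps)
  also have "\<dots> \<le> (\<Sum>i<2 * m. eta \<sigma> \<omega> T (b ! (3 * i)) + eta \<sigma> \<omega> T (b ! (3 * i + 2)))"
    by (rule bound)
  also have "\<dots> \<le> (\<Sum>x<length b. eta \<sigma> \<omega> T (b ! x))"
    using sum_outer_triples_le[of "\<lambda>x. eta \<sigma> \<omega> T (b ! x)" "2 * m"] length by (simp add: eta_def)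
  finally show ?thesis .
qed

end
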